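(* Let $\mathcal{H}\subseteq\mathcal{F}$ be saturated fusion systems over a finite $p$-group $S$, let $\mathcal{C}$ be a family of subgroups of $S$ closed under $\mathcal{F}$-conjugation and taking overgroups, let $P\in\mathcal{C}$ be fully $\mathcal{F}$-normalized, and put $\mathcal{F}_1=\mathcal{H}$, $\mathcal{F}_2=N_{\mathcal{F}}(P)$, $\mathcal{F}_e=N_{\mathcal{H}}(P)$, $S'=N_S(P)$ and $\Lambda=\{\mathcal{F}_1,\mathcal{F}_2,\mathcal{F}_e\}$. Assume that $\mathcal{F}=\langle\mathcal{H},\operatorname{Aut}_{\mathcal{F}}(P)\rangle_S$. Then $\operatorname{Rep}_{\mathcal{F}}(Q,\Lambda)$ is a tree for every $Q\le S$ that is not $\mathcal{F}$-conjugate to a proper subgroup of $P$. In particular $C_\Lambda(Q):=H_1(\operatorname{Rep}_{\mathcal{F}}(Q,\Lambda);\mathcal{R})=0$ for every such $Q$ and every commutative ring $\mathcal{R}$, and if $P$ is minimal under inclusion in $\mathcal{C}$ then the functor $C_\Lambda$ on $\mathcal{O}_{\mathcal{C}}(\mathcal{F})$ is zero.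
   Context: $\langle\ldots\rangle_S$ is the smallest fusion system over $S$ containing the listed data. $N_{\mathcal{F}}(P)$ is the fusion system over $N_S(P)$ with morphisms those $\mathcal{F}$-morphisms $\varphi:A\to B$ extending to $\hat\varphi:AP\to BP$ in $\mathcal{F}$ with $\hat\varphi(P)=P$. For a fusion system $\mathcal{E}$ over $S_{\mathcal{E}}$, $\operatorname{Rep}_{\mathcal{F}}(Q,\mathcal{E})=\operatorname{Hom}_{\mathcal{F}}(Q,S_{\mathcal{E}})/\sim$ with $\varphi\sim\psi$ iff $\theta\varphi=\psi$ for an $\mathcal{E}$-isomorphism $\theta:\varphi(Q)\to\psi(Q)$. $\operatorname{Rep}_{\mathcal{F}}(Q,\Lambda)$ is the bipartite graph with vertices $\operatorname{Rep}_{\mathcal{F}}(Q,\mathcal{F}_1)\sqcup\operatorname{Rep}_{\mathcal{F}}(Q,\mathcal{F}_2)$ and edges $\operatorname{Rep}_{\mathcal{F}}(Q,\mathcal{F}_e)$, the edge $[\varphi]_{\mathcal{F}_e}$ joining $[\varphi]_{\mathcal{F}_2}$ and $[\iota_{S'}^S\varphi]_{\mathcal{F}_1}$; $Q\mapsto H_1(\operatorname{Rep}_{\mathcal{F}}(Q,\Lambda);\mathcal{R})$ is a functor on $\mathcal{O}_{\mathcal{C}}(\mathcal{F})^{op}$ via precomposition. *)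

theory Defs
  imports "HOL-Algebra.Algebra"
begin

text \<open>Morphisms of a fusion system are triples (A, B, phi): an injective group
homomorphism phi : A -> B between subgroups A, B of the ambient finite group,
phi extensional on A.\<close>

type_synonym 'a fmor = "'a set \<times> 'a set \<times> ('a \<Rightarrow> 'a)"

definition inj_hom :: "('a, 'b) monoid_scheme \<Rightarrow> 'a set \<Rightarrow> 'a set \<Rightarrow> ('a \<Rightarrow> 'a) set" where
  "inj_hom G A B = {\<phi>. \<phi> \<in> hom (G\<lparr>carrier := A\<rparr>) (G\<lparr>carrier := B\<rparr>) \<and> inj_on \<phi> A \<and> \<phi> \<in> extensional A}"

definition conjm :: "('a, 'b) monoid_scheme \<Rightarrow> 'a \<Rightarrow> 'a \<Rightarrow> 'a" where
  "conjm G g x = g \<otimes>\<^bsub>G\<^esub> x \<otimes>\<^bsub>G\<^esub> inv\<^bsub>G\<^esub> g"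

definition is_subgroup_of :: "('a, 'b) monoid_scheme \<Rightarrow> 'a set \<Rightarrow> 'a set \<Rightarrow> bool" where
  "is_subgroup_of G T A \<longleftrightarrow> subgroup A G \<and> A \<subseteq> T"

definition fusion_system :: "('a, 'b) monoid_scheme \<Rightarrow> 'a set \<Rightarrow> 'a fmor set \<Rightarrow> bool" where
  "fusion_system G T F \<longleftrightarrow> subgroup T G \<and>
     (\<forall>(A, B, \<phi>) \<in> F. is_subgroup_of G T A \<and> is_subgroup_of G T B \<and> \<phi> \<in> inj_hom G A B) \<and>
     (\<forall>A B g. is_subgroup_of G T A \<and> is_subgroup_of G T B \<and> g \<in> T \<and> conjm G g ` A \<subseteq> B
          \<longrightarrow> (A, B, restrict (conjm G g) A) \<in> F) \<and>
     (\<forall>A B C \<phi> \<psi>. (A, B, \<phi>) \<in> F \<and> (B, C, \<psi>) \<in> F \<longrightarrow> (A, C, restrict (\<psi> \<circ> \<phi>) A) \<in> F) \<and>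
     (\<forall>A B \<phi>. (A, B, \<phi>) \<in> F \<longrightarrow>
          (A, \<phi> ` A, \<phi>) \<in> F \<and> (\<phi> ` A, A, restrict (inv_into A \<phi>) (\<phi> ` A)) \<in> F)"

definition Hom_F :: "'a fmor set \<Rightarrow> 'a set \<Rightarrow> 'a set \<Rightarrow> ('a \<Rightarrow> 'a) set" where
  "Hom_F F A B = {\<phi>. (A, B, \<phi>) \<in> F}"

definition Aut_F :: "'a fmor set \<Rightarrow> 'a set \<Rightarrow> ('a \<Rightarrow> 'a) set" where
  "Aut_F F A = Hom_F F A A"

definition normalizer_in :: "('a, 'b) monoid_scheme \<Rightarrow> 'a set \<Rightarrow> 'a set \<Rightarrow> 'a set" where
  "normalizer_in G T A = {g \<in> T. conjm G g ` A = A}"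

definition centralizer_in :: "('a, 'b) monoid_scheme \<Rightarrow> 'a set \<Rightarrow> 'a set \<Rightarrow> 'a set" where
  "centralizer_in G T A = {g \<in> T. \<forall>a \<in> A. g \<otimes>\<^bsub>G\<^esub> a = a \<otimes>\<^bsub>G\<^esub> g}"

definition Aut_in :: "('a, 'b) monoid_scheme \<Rightarrow> 'a set \<Rightarrow> 'a set \<Rightarrow> ('a \<Rightarrow> 'a) set" where
  "Aut_in G T A = {restrict (conjm G g) A | g. g \<in> normalizer_in G T A}"

definition F_conjugate :: "'a fmor set \<Rightarrow> 'a set \<Rightarrow> 'a set \<Rightarrow> bool" where
  "F_conjugate F A B \<longleftrightarrow> (\<exists>\<phi>. (A, B, \<phi>) \<in> F \<and> \<phi> ` A = B)"

definition fully_normalized :: "('a, 'b) monoid_scheme \<Rightarrow> 'a set \<Rightarrow> 'a fmor set \<Rightarrow> 'a set \<Rightarrow> bool" where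
  "fully_normalized G T F A \<longleftrightarrow> is_subgroup_of G T A \<and>
     (\<forall>B. F_conjugate F A B \<longrightarrow> card (normalizer_in G T B) \<le> card (normalizer_in G T A))"

definition fully_centralized :: "('a, 'b) monoid_scheme \<Rightarrow> 'a set \<Rightarrow> 'a fmor set \<Rightarrow> 'a set \<Rightarrow> bool" where
  "fully_centralized G T F A \<longleftrightarrow> is_subgroup_of G T A \<and>
     (\<forall>B. F_conjugate F A B \<longrightarrow> card (centralizer_in G T B) \<le> card (centralizer_in G T A))"

definition N_phi :: "('a, 'b) monoid_scheme \<Rightarrow> 'a set \<Rightarrow> 'a set \<Rightarrow> ('a \<Rightarrow> 'a) \<Rightarrow> 'a set" where
  "N_phi G T A \<phi> = {g \<in> normalizer_in G T A. \<exists>h \<in> normalizer_in G T (\<phi> ` A).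
        \<forall>a \<in> A. \<phi> (conjm G g a) = conjm G h (\<phi> a)}"

text \<open>Saturated fusion system over the finite p-group T (Broto-Levi-Oliver / Roberts-Shpectorov axioms).
Sylow axiom: Aut_T(A) is a Sylow p-subgroup of Aut_F(A), i.e. its index is prime to p.\<close>
definition saturated :: "('a, 'b) monoid_scheme \<Rightarrow> 'a set \<Rightarrow> nat \<Rightarrow> 'a fmor set \<Rightarrow> bool" where
  "saturated G T p F \<longleftrightarrow> fusion_system G T F \<and>
     (\<forall>A. fully_normalized G T F A \<longrightarrow>
          fully_centralized G T F A \<and>
          (\<exists>m. card (Aut_F F A) = card (Aut_in G T A) * m \<and> \<not> p dvd m)) \<and>
     (\<forall>A \<phi>. (A, T, \<phi>) \<in> F \<and> fully_centralized G T F (\<phi> ` A) \<longrightarrow>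
          (\<exists>\<psi>. (N_phi G T A \<phi>, T, \<psi>) \<in> F \<and> (\<forall>a \<in> A. \<psi> a = \<phi> a)))"

definition generated_fs :: "('a, 'b) monoid_scheme \<Rightarrow> 'a set \<Rightarrow> 'a fmor set \<Rightarrow> 'a fmor set" where
  "generated_fs G T Xs = {f. \<forall>F. fusion_system G T F \<and> Xs \<subseteq> F \<longrightarrow> f \<in> F}"

definition normalizer_fs :: "('a, 'b) monoid_scheme \<Rightarrow> 'a set \<Rightarrow> 'a fmor set \<Rightarrow> 'a set \<Rightarrow> 'a fmor set" where
  "normalizer_fs G T F P = {(A, B, \<phi>). A \<subseteq> normalizer_in G T P \<and> B \<subseteq> normalizer_in G T P \<and>
      (A, B, \<phi>) \<in> F \<and>
      (\<exists>\<psi>. (set_mult G A P, set_mult G B P, \<psi>) \<in> F \<and> (\<forall>a \<in> A. \<psi> a = \<phi> a) \<and> \<psi> ` P = P)}"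

text \<open>Rep_F(Q, E) for a fusion system E over SE: classes of Hom_F(Q, SE) modulo
post-composition with E-isomorphisms.\<close>
definition rep_class :: "'a fmor set \<Rightarrow> 'a set \<Rightarrow> 'a fmor set \<Rightarrow> 'a set \<Rightarrow> ('a \<Rightarrow> 'a) \<Rightarrow> ('a \<Rightarrow> 'a) set" where
  "rep_class F SE E Q \<phi> = {\<psi> \<in> Hom_F F Q SE. \<exists>\<theta>. (\<phi> ` Q, \<psi> ` Q, \<theta>) \<in> E \<and> \<theta> ` (\<phi> ` Q) = \<psi> ` Q \<and>
        (\<forall>x \<in> Q. \<theta> (\<phi> x) = \<psi> x)}"

definition Rep :: "'a fmor set \<Rightarrow> 'a set \<Rightarrow> 'a fmor set \<Rightarrow> 'a set \<Rightarrow> ('a \<Rightarrow> 'a) set set" where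
  "Rep F SE E Q = rep_class F SE E Q ` Hom_F F Q SE"

text \<open>Finite multigraphs given by a vertex set, an edge set and an endpoint map.\<close>
definition mg_connected :: "'v set \<Rightarrow> 'e set \<Rightarrow> ('e \<Rightarrow> 'v \<times> 'v) \<Rightarrow> bool" where
  "mg_connected V E ends \<longleftrightarrow> V \<noteq> {} \<and>
     (\<forall>u \<in> V. \<forall>v \<in> V. (u, v) \<in> {(x, y). \<exists>e \<in> E. ends e = (x, y) \<or> ends e = (y, x)}\<^sup>*)"

definition mg_acyclic :: "'v set \<Rightarrow> 'e set \<Rightarrow> ('e \<Rightarrow> 'v \<times> 'v) \<Rightarrow> bool" where
  "mg_acyclic V E ends \<longleftrightarrow> \<not> (\<exists>es vs. es \<noteq> [] \<and> length vs = length es \<and> distinct es \<and> distinct vs \<and>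
      set es \<subseteq> E \<and> set vs \<subseteq> V \<and>
      (\<forall>i < length es. ends (es ! i) = (vs ! i, vs ! ((i + 1) mod length es)) \<or>
                       ends (es ! i) = (vs ! ((i + 1) mod length es), vs ! i)))"

definition mg_tree :: "'v set \<Rightarrow> 'e set \<Rightarrow> ('e \<Rightarrow> 'v \<times> 'v) \<Rightarrow> bool" where
  "mg_tree V E ends \<longleftrightarrow> mg_connected V E ends \<and> mg_acyclic V E ends"

text \<open>First homology H_1(Gamma; R) of a graph = kernel of the boundary map
R^E -> R^V (chains are functions on edges vanishing off E; edges oriented by ends).\<close>
definition mg_H1 :: "'v set \<Rightarrow> 'e set \<Rightarrow> ('e \<Rightarrow> 'v \<times> 'v) \<Rightarrow> ('e \<Rightarrow> 'r::comm_ring_1) set" where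
  "mg_H1 V E ends = {c. (\<forall>e. e \<notin> E \<longrightarrow> c e = 0) \<and>
      (\<forall>v \<in> V. (\<Sum>e \<in> {e \<in> E. snd (ends e) = v}. c e) - (\<Sum>e \<in> {e \<in> E. fst (ends e) = v}. c e) = 0)}"

text \<open>The graph Rep_F(Q, Lambda) for Lambda = {F1 over S1, F2 over S2, Fe over Se}, Se \<subseteq> S1, S2:
vertices Rep(Q,F1) + Rep(Q,F2); the edge [phi]_Fe joins [iota phi]_F1 and [phi]_F2.\<close>
definition RepL_V :: "'a fmor set \<Rightarrow> 'a set \<Rightarrow> 'a fmor set \<Rightarrow> 'a set \<Rightarrow> 'a fmor set \<Rightarrow> 'a set
     \<Rightarrow> (('a \<Rightarrow> 'a) set + ('a \<Rightarrow> 'a) set) set" where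
  "RepL_V F S1 F1 S2 F2 Q = Inl ` Rep F S1 F1 Q \<union> Inr ` Rep F S2 F2 Q"

definition RepL_E :: "'a fmor set \<Rightarrow> 'a set \<Rightarrow> 'a fmor set \<Rightarrow> 'a set \<Rightarrow> ('a \<Rightarrow> 'a) set set" where
  "RepL_E F Se Fe Q = Rep F Se Fe Q"

definition RepL_ends :: "'a fmor set \<Rightarrow> 'a set \<Rightarrow> 'a fmor set \<Rightarrow> 'a set \<Rightarrow> 'a fmor set \<Rightarrow> 'a set
     \<Rightarrow> ('a \<Rightarrow> 'a) set \<Rightarrow> (('a \<Rightarrow> 'a) set + ('a \<Rightarrow> 'a) set) \<times> (('a \<Rightarrow> 'a) set + ('a \<Rightarrow> 'a) set)" where
  "RepL_ends F S1 F1 S2 F2 Q e = (let \<phi> = (SOME \<phi>. \<phi> \<in> e) in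
      (Inl (rep_class F S1 F1 Q \<phi>), Inr (rep_class F S2 F2 Q \<phi>)))"

end

theory Submission
  imports Defs
begin

(*
  Every generator of F, i.e. every morphism of H and every F-automorphism of P, is an F-morphism
  that lies in H whenever its source is not F-conjugate into P, and that preserves, on all
  subgroups of its source, the property of being H-conjugate to P. These F-morphisms form a
  fusion system, so they exhaust F.

  In Rep_F(Q, Lambda) the edge [phi] of N_H(P) joins the vertices [phi] of H and of N_F(P).
  If phi(Q) <> P, it is the only edge at its N_F(P)-vertex: an N_F(P)-isomorphism out of phi(Q)
  extends to phi(Q)P, which properly contains P because Q is not F-conjugate to a proper subgroup
  of P, so the extension lies in H. Edges with phi(Q) = P have distinct H-vertices because
  Aut_H(P) lies in N_H(P). A bipartite graph with these two properties has no cycles and no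
  nonzero 1-cycles. It is connected: every N_F(P)-vertex carries an edge, and the H-vertices
  either coincide (if Q is not F-conjugate into P, then Hom_F(Q, S) lies in H) or are all adjacent
  to the N_F(P)-vertex of a single H-isomorphism Q -> P.
*)

section \<open>Conjugation, normalizers and products of subgroups\<close>

lemma set_mult_iff: "x \<in> A <#>\<^bsub>G\<^esub> B \<longleftrightarrow> (\<exists>a\<in>A. \<exists>b\<in>B. x = a \<otimes>\<^bsub>G\<^esub> b)"
  unfolding set_mult_def by blast

context group
begin

lemma m_inv_cancel_left: "x \<in> carrier G \<Longrightarrow> y \<in> carrier G \<Longrightarrow> x \<otimes> (inv x \<otimes> y) = y"
  by (simp add: m_assoc[symmetric])

lemma inv_m_cancel_left: "x \<in> carrier G \<Longrightarrow> y \<in> carrier G \<Longrightarrow> inv x \<otimes> (x \<otimes> y) = y"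
  by (simp add: m_assoc[symmetric])

lemma conjm_mult:
  "g \<in> carrier G \<Longrightarrow> h \<in> carrier G \<Longrightarrow> x \<in> carrier G \<Longrightarrow> conjm G (g \<otimes> h) x = conjm G g (conjm G h x)"
  by (simp add: conjm_def m_assoc inv_mult_group)

lemma conjm_inv_cancel: "g \<in> carrier G \<Longrightarrow> x \<in> carrier G \<Longrightarrow> conjm G (inv g) (conjm G g x) = x"
  by (simp add: conjm_def m_assoc inv_m_cancel_left)

lemma conjm_inv_image:
  "g \<in> carrier G \<Longrightarrow> P \<subseteq> carrier G \<Longrightarrow> conjm G (inv g) ` conjm G g ` P = P"
  by (simp add: image_comp subset_iff conjm_inv_cancel cong: image_cong)

lemma subgroup_normalizer_in:
  assumes T: "subgroup T G" and P: "P \<subseteq> carrier G"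
  shows "subgroup (normalizer_in G T P) G"
proof (rule subgroupI)
  show "normalizer_in G T P \<subseteq> carrier G"
    using subgroup.subset[OF T] unfolding normalizer_in_def by blast
  have "conjm G \<one> ` P = P"
    using P by (simp add: conjm_def subset_iff cong: image_cong)
  then show "normalizer_in G T P \<noteq> {}"
    using subgroup.one_closed[OF T] unfolding normalizer_in_def by blast
next
  fix a assume a: "a \<in> normalizer_in G T P"
  then have "a \<in> carrier G" "conjm G a ` P = P"
    using subgroup.subset[OF T] unfolding normalizer_in_def by blast+
  then have "conjm G (inv a) ` P = P"
    using conjm_inv_image P by metis
  then show "inv a \<in> normalizer_in G T P"
    using a subgroup.m_inv_closed[OF T] unfolding normalizer_in_def by blast
next
  fix a b assume a: "a \<in> normalizer_in G T P" and b: "b \<in> normalizer_in G T P"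
  then have "a \<in> carrier G" "b \<in> carrier G"
    using subgroup.subset[OF T] unfolding normalizer_in_def by blast+
  then have "conjm G (a \<otimes> b) ` P = conjm G a ` conjm G b ` P"
    using P by (simp add: image_comp subset_iff conjm_mult cong: image_cong)
  then show "a \<otimes> b \<in> normalizer_in G T P"
    using a b subgroup.m_closed[OF T] unfolding normalizer_in_def by simp
qed

lemma subgroup_subset_normalizer_in:
  assumes P: "subgroup P G" "P \<subseteq> T"
  shows "P \<subseteq> normalizer_in G T P"
proof
  fix p assume p: "p \<in> P"
  have closed: "conjm G g ` P \<subseteq> P" if "g \<in> P" for g
    using that P(1) by (auto simp: conjm_def subgroup.m_closed subgroup.m_inv_closed)
  have "P = conjm G p ` conjm G (inv p) ` P"
    using conjm_inv_image[of "inv p" P] p subgroup.mem_carrier[OF P(1)] subgroup.subset[OF P(1)]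
    by simp
  also have "\<dots> \<subseteq> conjm G p ` P"
    using closed p subgroup.m_inv_closed[OF P(1)] by (intro image_mono) blast
  finally have "conjm G p ` P = P"
    using closed p by blast
  then show "p \<in> normalizer_in G T P"
    using p P(2) unfolding normalizer_in_def by blast
qed

lemma set_mult_subset_subgroup:
  assumes "subgroup T G" "A \<subseteq> T" "B \<subseteq> T"
  shows "A <#> B \<subseteq> T"
proof
  fix x assume "x \<in> A <#> B"
  then obtain a b where "a \<in> A" "b \<in> B" "x = a \<otimes> b"
    unfolding set_mult_iff by blast
  then show "x \<in> T"
    using assms(2,3) subgroup.m_closed[OF assms(1)] by blast
qed

lemma subset_set_mult_left:
  assumes "subgroup A G" "B \<subseteq> carrier G"
  shows "B \<subseteq> A <#> B"
proof
  fix b assume "b \<in> B"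
  then have "b = \<one> \<otimes> b" using assms(2) by auto
  then show "b \<in> A <#> B"
    using \<open>b \<in> B\<close> subgroup.one_closed[OF assms(1)] unfolding set_mult_iff by blast
qed

lemma subset_set_mult_right:
  assumes "subgroup B G" "A \<subseteq> carrier G"
  shows "A \<subseteq> A <#> B"
proof
  fix a assume "a \<in> A"
  then have "a = a \<otimes> \<one>" using assms(2) by auto
  then show "a \<in> A <#> B"
    using \<open>a \<in> A\<close> subgroup.one_closed[OF assms(1)] unfolding set_mult_iff by blast
qed

lemma subgroup_set_mult_normalizer_in:
  assumes P: "subgroup P G" and A: "subgroup A G" "A \<subseteq> normalizer_in G T P"
  shows "subgroup (A <#> P) G"
proof -
  have N: "a \<in> carrier G" "conjm G a ` P = P" if "a \<in> A" for a
    using that A(2) subgroup.mem_carrier[OF A(1)] unfolding normalizer_in_def by auto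
  have Pc: "p \<in> carrier G" if "p \<in> P" for p
    using that subgroup.mem_carrier[OF P] by blast
  show ?thesis
  proof (rule subgroupI)
    show "A <#> P \<subseteq> carrier G"
      using N(1) Pc unfolding subset_iff set_mult_iff by blast
    show "A <#> P \<noteq> {}"
      using subset_set_mult_left[OF A(1) subgroup.subset[OF P]] subgroup.one_closed[OF P] by blast
  next
    fix x assume "x \<in> A <#> P"
    then obtain a p where ap: "a \<in> A" "p \<in> P" "x = a \<otimes> p"
      unfolding set_mult_iff by blast
    have "inv x = inv a \<otimes> conjm G a (inv p)"
      using ap N Pc by (simp add: conjm_def inv_mult_group m_assoc inv_m_cancel_left)
    moreover have "conjm G a (inv p) \<in> P"
      using ap N(2) subgroup.m_inv_closed[OF P] by blast
    ultimately show "inv x \<in> A <#> P"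
      using ap subgroup.m_inv_closed[OF A(1)] unfolding set_mult_iff by blast
  next
    fix x y assume "x \<in> A <#> P" "y \<in> A <#> P"
    then obtain a p b q where ap: "a \<in> A" "p \<in> P" "x = a \<otimes> p"
      and bq: "b \<in> A" "q \<in> P" "y = b \<otimes> q"
      unfolding set_mult_iff by blast
    have "x \<otimes> y = (a \<otimes> b) \<otimes> (conjm G (inv b) p \<otimes> q)"
      using ap bq N Pc by (simp add: conjm_def m_assoc m_inv_cancel_left)
    moreover have "conjm G (inv b) p \<in> P"
      using conjm_inv_image[of b P] N[OF bq(1)] ap(2) subgroup.subset[OF P] by blast
    ultimately show "x \<otimes> y \<in> A <#> P"
      using ap bq subgroup.m_closed[OF A(1)] subgroup.m_closed[OF P] unfolding set_mult_iff by blast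
  qed
qed

end

definition F_subconjugate :: "'a fmor set \<Rightarrow> 'a set \<Rightarrow> 'a set \<Rightarrow> bool" where
  "F_subconjugate F A P \<longleftrightarrow> (\<exists>R. R \<subseteq> P \<and> F_conjugate F A R)"

definition closed_comp_inv :: "'a fmor set \<Rightarrow> bool" where
  "closed_comp_inv E \<longleftrightarrow>
     (\<forall>A B C \<theta>\<^sub>1 \<theta>\<^sub>2. (A, B, \<theta>\<^sub>1) \<in> E \<longrightarrow> (B, C, \<theta>\<^sub>2) \<in> E \<longrightarrow> (A, C, restrict (\<theta>\<^sub>2 \<circ> \<theta>\<^sub>1) A) \<in> E) \<and>
     (\<forall>A B \<theta>. (A, B, \<theta>) \<in> E \<longrightarrow> \<theta> ` A = B \<longrightarrow> (B, A, restrict (inv_into A \<theta>) B) \<in> E \<and> inj_on \<theta> A)"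

lemma closed_comp_invI:
  assumes "\<And>A B C \<theta>\<^sub>1 \<theta>\<^sub>2. (A, B, \<theta>\<^sub>1) \<in> E \<Longrightarrow> (B, C, \<theta>\<^sub>2) \<in> E \<Longrightarrow> (A, C, restrict (\<theta>\<^sub>2 \<circ> \<theta>\<^sub>1) A) \<in> E"
    and "\<And>A B \<theta>. (A, B, \<theta>) \<in> E \<Longrightarrow> \<theta> ` A = B \<Longrightarrow> (B, A, restrict (inv_into A \<theta>) B) \<in> E"
    and "\<And>A B \<theta>. (A, B, \<theta>) \<in> E \<Longrightarrow> inj_on \<theta> A"
  shows "closed_comp_inv E"
  using assms unfolding closed_comp_inv_def by blast

locale finite_fusion_system = group G
  for G :: "('a, 'b) monoid_scheme" (structure) +
  fixes T :: "'a set" and F :: "'a fmor set"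
  assumes finite_carrier: "finite (carrier G)" and fusion_system: "fusion_system G T F"
begin

lemma subgroup_T: "subgroup T G"
  using fusion_system unfolding fusion_system_def by blast

lemma finite_subgroup: "subgroup A G \<Longrightarrow> finite A"
  using finite_carrier subgroup.subset finite_subset by blast

lemma morD:
  assumes "(A, B, \<phi>) \<in> F"
  shows "subgroup A G" "A \<subseteq> T" "subgroup B G" "B \<subseteq> T" "\<phi> ` A \<subseteq> B" "inj_on \<phi> A"
    "\<phi> \<in> extensional A" "\<And>x y. x \<in> A \<Longrightarrow> y \<in> A \<Longrightarrow> \<phi> (x \<otimes> y) = \<phi> x \<otimes> \<phi> y"
proof -
  have "is_subgroup_of G T A \<and> is_subgroup_of G T B \<and> \<phi> \<in> inj_hom G A B"
    using fusion_system assms unfolding fusion_system_def by fast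
  then show "subgroup A G" "A \<subseteq> T" "subgroup B G" "B \<subseteq> T" "\<phi> ` A \<subseteq> B" "inj_on \<phi> A"
    "\<phi> \<in> extensional A" "\<And>x y. x \<in> A \<Longrightarrow> y \<in> A \<Longrightarrow> \<phi> (x \<otimes> y) = \<phi> x \<otimes> \<phi> y"
    by (auto simp: is_subgroup_of_def inj_hom_def hom_def)
qed

lemma conj_mor:
  assumes "subgroup A G" "A \<subseteq> T" "subgroup B G" "B \<subseteq> T" "g \<in> T" "conjm G g ` A \<subseteq> B"
  shows "(A, B, restrict (conjm G g) A) \<in> F"
  using fusion_system assms unfolding fusion_system_def is_subgroup_of_def by blast

lemma comp_mor: "(A, B, \<phi>) \<in> F \<Longrightarrow> (B, C, \<psi>) \<in> F \<Longrightarrow> (A, C, restrict (\<psi> \<circ> \<phi>) A) \<in> F"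
  using fusion_system unfolding fusion_system_def by blast

lemma mor_onto_image: "(A, B, \<phi>) \<in> F \<Longrightarrow> (A, \<phi> ` A, \<phi>) \<in> F"
  using fusion_system unfolding fusion_system_def by blast

lemma inv_mor: "(A, B, \<phi>) \<in> F \<Longrightarrow> (\<phi> ` A, A, restrict (inv_into A \<phi>) (\<phi> ` A)) \<in> F"
  using fusion_system unfolding fusion_system_def by blast

lemma inclusion_mor:
  assumes "subgroup A G" "A \<subseteq> B" "subgroup B G" "B \<subseteq> T"
  shows "(A, B, restrict id A) \<in> F"
proof -
  have "restrict (conjm G \<one>) A = restrict id A"
    using assms(1) by (auto simp: conjm_def subgroup.mem_carrier)
  moreover have "conjm G \<one> ` A \<subseteq> B"
    using assms by (auto simp: conjm_def subgroup.mem_carrier)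
  ultimately show ?thesis
    using conj_mor[OF assms(1) _ assms(3,4) subgroup.one_closed[OF subgroup_T]] assms by auto
qed

lemma mor_enlarge_codomain:
  assumes "(A, B, \<phi>) \<in> F" "B \<subseteq> B'" "subgroup B' G" "B' \<subseteq> T"
  shows "(A, B', \<phi>) \<in> F"
proof -
  have "(A, B', restrict (restrict id B \<circ> \<phi>) A) \<in> F"
    using comp_mor[OF assms(1) inclusion_mor] morD[OF assms(1)] assms by blast
  moreover have "restrict (restrict id B \<circ> \<phi>) A = \<phi>"
    using morD[OF assms(1)] by (auto simp: extensional_def fun_eq_iff)
  ultimately show ?thesis by simp
qed

lemma mor_change_codomain:
  "(A, B, \<phi>) \<in> F \<Longrightarrow> \<phi> ` A \<subseteq> B' \<Longrightarrow> subgroup B' G \<Longrightarrow> B' \<subseteq> T \<Longrightarrow> (A, B', \<phi>) \<in> F"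
  using mor_enlarge_codomain[OF mor_onto_image] .

lemma restrict_mor:
  assumes "(A, B, \<phi>) \<in> F" "subgroup A' G" "A' \<subseteq> A"
  shows "(A', B, restrict \<phi> A') \<in> F"
  using comp_mor[OF inclusion_mor assms(1)] morD[OF assms(1)] assms
  by (auto simp: fun_eq_iff cong: restrict_cong)

lemma mor_image_subgroup: "(A, B, \<phi>) \<in> F \<Longrightarrow> subgroup (\<phi> ` A) G \<and> \<phi> ` A \<subseteq> T"
  using morD(3,4)[OF mor_onto_image] by blast

lemma restricted_image_subgroup:
  assumes "(A, B, \<phi>) \<in> F" "subgroup A' G" "A' \<subseteq> A"
  shows "subgroup (\<phi> ` A') G"
  using mor_image_subgroup[OF restrict_mor[OF assms]] assms(3) by (simp cong: image_cong)

lemma card_mor_image: "(A, B, \<phi>) \<in> F \<Longrightarrow> card (\<phi> ` A) = card A"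
  using morD(6) card_image by blast

lemma aut_image: assumes "(A, A, \<phi>) \<in> F" shows "\<phi> ` A = A"
  using card_mor_image[OF assms] morD(5)[OF assms] finite_subgroup[OF morD(1)[OF assms]]
  by (simp add: card_subset_eq)

lemma F_conjugate_refl: "subgroup A G \<Longrightarrow> A \<subseteq> T \<Longrightarrow> F_conjugate F A A"
  unfolding F_conjugate_def using inclusion_mor[of A A] by (intro exI[of _ "restrict id A"]) auto

lemma F_conjugate_image: "(A, B, \<phi>) \<in> F \<Longrightarrow> F_conjugate F A (\<phi> ` A)"
  unfolding F_conjugate_def using mor_onto_image by blast

lemma F_conjugate_trans:
  assumes "F_conjugate F A B" "F_conjugate F B C" shows "F_conjugate F A C"
proof -
  obtain \<phi> \<psi> where "(A, B, \<phi>) \<in> F" "\<phi> ` A = B" "(B, C, \<psi>) \<in> F" "\<psi> ` B = C"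
    using assms unfolding F_conjugate_def by blast
  then show ?thesis
    unfolding F_conjugate_def using comp_mor by (intro exI[of _ "restrict (\<psi> \<circ> \<phi>) A"]) (auto simp: image_comp)
qed

lemma F_conjugate_sym:
  assumes "F_conjugate F A B" shows "F_conjugate F B A"
proof -
  obtain \<phi> where "(A, B, \<phi>) \<in> F" "\<phi> ` A = B"
    using assms unfolding F_conjugate_def by blast
  then show ?thesis
    unfolding F_conjugate_def using inv_mor morD(6)
    by (intro exI[of _ "restrict (inv_into A \<phi>) (\<phi> ` A)"]) auto
qed

lemma F_conjugate_card: "F_conjugate F A B \<Longrightarrow> card A = card B"
  unfolding F_conjugate_def using card_mor_image by metis

lemma closed_comp_inv: "closed_comp_inv F"
  using comp_mor inv_mor morD(6) by (intro closed_comp_invI) auto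

lemma F_conjugate_restrict_image:
  assumes "(A, B, \<phi>) \<in> F" "subgroup A' G" "A' \<subseteq> A"
  shows "F_conjugate F A' (\<phi> ` A')"
  using F_conjugate_image[OF restrict_mor[OF assms]] assms(3) by (simp cong: image_cong)

lemma F_subconjugate_if_mor:
  assumes "(A, B, \<phi>) \<in> F" "F_subconjugate F B P"
  shows "F_subconjugate F A P"
proof -
  obtain R k where "R \<subseteq> P" "(B, R, k) \<in> F"
    using assms(2) unfolding F_subconjugate_def F_conjugate_def by blast
  then show ?thesis
    using F_conjugate_image[OF comp_mor[OF assms(1)]] morD(5)[OF comp_mor[OF assms(1)]]
    unfolding F_subconjugate_def by blast
qed

lemma F_subconjugate_image:
  "(A, B, \<phi>) \<in> F \<Longrightarrow> F_subconjugate F A P \<Longrightarrow> F_subconjugate F (\<phi> ` A) P"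
  using F_subconjugate_if_mor[OF inv_mor] .

lemma mor_image_set_mult:
  assumes "(K, B, \<psi>) \<in> F" "A \<subseteq> K" "C \<subseteq> K"
  shows "\<psi> ` (A <#> C) = \<psi> ` A <#> \<psi> ` C"
proof -
  have hom: "\<psi> (a \<otimes> c) = \<psi> a \<otimes> \<psi> c" if "a \<in> A" "c \<in> C" for a c
    using morD(8)[OF assms(1) subsetD[OF assms(2) that(1)] subsetD[OF assms(3) that(2)]] .
  show ?thesis
  proof (intro equalityI subsetI)
    fix x assume "x \<in> \<psi> ` (A <#> C)"
    then obtain y where "y \<in> A <#> C" "x = \<psi> y"
      by blast
    then obtain a c where "a \<in> A" "c \<in> C" "x = \<psi> a \<otimes> \<psi> c"
      using hom unfolding set_mult_iff by blast
    then show "x \<in> \<psi> ` A <#> \<psi> ` C"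
      unfolding set_mult_iff by blast
  next
    fix x assume "x \<in> \<psi> ` A <#> \<psi> ` C"
    then obtain a c where ac: "a \<in> A" "c \<in> C" "x = \<psi> (a \<otimes> c)"
      using hom unfolding set_mult_iff by auto
    moreover have "a \<otimes> c \<in> A <#> C"
      using ac(1,2) unfolding set_mult_iff by blast
    ultimately show "x \<in> \<psi> ` (A <#> C)" by simp
  qed
qed

lemma not_F_subconjugate_if_psupset:
  assumes "subgroup K G" "P \<subset> K"
  shows "\<not> F_subconjugate F K P"
proof
  assume "F_subconjugate F K P"
  then obtain R where "R \<subseteq> P" "card K = card R"
    using F_conjugate_card unfolding F_subconjugate_def by blast
  moreover have "finite K" using finite_subgroup[OF assms(1)] .
  ultimately show False
    using assms(2) by (metis card_mono card_seteq finite_subset less_le order_trans)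
qed

lemma finite_Hom_F: "subgroup Q G \<Longrightarrow> finite (Hom_F F Q B)"
proof (rule finite_subset)
  show "Hom_F F Q B \<subseteq> Q \<rightarrow>\<^sub>E carrier G"
    using morD(3,5,7) subgroup.subset unfolding Hom_F_def PiE_def by fast
  show "subgroup Q G \<Longrightarrow> finite (Q \<rightarrow>\<^sub>E carrier G)"
    using finite_subgroup finite_carrier by (simp add: finite_PiE)
qed

end

section \<open>Classes of morphisms modulo a fusion system\<close>

lemma rep_class_iff:
  "\<psi> \<in> rep_class F SE E Q \<phi> \<longleftrightarrow> \<psi> \<in> Hom_F F Q SE \<and>
     (\<exists>\<theta>. (\<phi> ` Q, \<psi> ` Q, \<theta>) \<in> E \<and> \<theta> ` \<phi> ` Q = \<psi> ` Q \<and> (\<forall>x \<in> Q. \<theta> (\<phi> x) = \<psi> x))"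
  unfolding rep_class_def by blast

lemma rep_class_mono:
  "E \<subseteq> E' \<Longrightarrow> Hom_F F Q SE \<subseteq> Hom_F F Q SE' \<Longrightarrow> rep_class F SE E Q \<phi> \<subseteq> rep_class F SE' E' Q \<phi>"
  unfolding rep_class_def by blast

lemma rep_class_self:
  "(\<phi> ` Q, \<phi> ` Q, restrict id (\<phi> ` Q)) \<in> E \<Longrightarrow> \<phi> \<in> Hom_F F Q SE \<Longrightarrow> \<phi> \<in> rep_class F SE E Q \<phi>"
  unfolding rep_class_iff by (intro conjI exI[of _ "restrict id (\<phi> ` Q)"]) auto

lemma rep_class_trans:
  assumes E: "closed_comp_inv E" and "\<psi> \<in> rep_class F SE E Q \<phi>" "\<chi> \<in> rep_class F SE E Q \<psi>"
  shows "\<chi> \<in> rep_class F SE E Q \<phi>"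
proof -
  obtain \<theta>\<^sub>1 where
    \<theta>\<^sub>1: "(\<phi> ` Q, \<psi> ` Q, \<theta>\<^sub>1) \<in> E" "\<theta>\<^sub>1 ` \<phi> ` Q = \<psi> ` Q" "\<forall>x \<in> Q. \<theta>\<^sub>1 (\<phi> x) = \<psi> x"
    using assms(2) unfolding rep_class_iff by (elim conjE exE)
  obtain \<theta>\<^sub>2 where
    \<theta>\<^sub>2: "(\<psi> ` Q, \<chi> ` Q, \<theta>\<^sub>2) \<in> E" "\<theta>\<^sub>2 ` \<psi> ` Q = \<chi> ` Q" "\<forall>x \<in> Q. \<theta>\<^sub>2 (\<psi> x) = \<chi> x"
    and "\<chi> \<in> Hom_F F Q SE"
    using assms(3) unfolding rep_class_iff by (elim conjE exE)
  moreover have "(\<phi> ` Q, \<chi> ` Q, restrict (\<theta>\<^sub>2 \<circ> \<theta>\<^sub>1) (\<phi> ` Q)) \<in> E"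
    using E \<theta>\<^sub>1(1) \<theta>\<^sub>2(1) unfolding closed_comp_inv_def by blast
  moreover have "restrict (\<theta>\<^sub>2 \<circ> \<theta>\<^sub>1) (\<phi> ` Q) ` \<phi> ` Q = \<chi> ` Q"
  proof -
    have "restrict (\<theta>\<^sub>2 \<circ> \<theta>\<^sub>1) (\<phi> ` Q) ` \<phi> ` Q = \<theta>\<^sub>2 ` \<theta>\<^sub>1 ` \<phi> ` Q"
      by (simp add: image_image)
    then show ?thesis
      by (simp only: \<theta>\<^sub>1(2) \<theta>\<^sub>2(2))
  qed
  ultimately show ?thesis
    using \<theta>\<^sub>1(3) unfolding rep_class_iff
    by (intro conjI exI[of _ "restrict (\<theta>\<^sub>2 \<circ> \<theta>\<^sub>1) (\<phi> ` Q)"]) auto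
qed

lemma rep_class_sym:
  assumes E: "closed_comp_inv E" and "\<psi> \<in> rep_class F SE E Q \<phi>" "\<phi> \<in> Hom_F F Q SE"
  shows "\<phi> \<in> rep_class F SE E Q \<psi>"
proof -
  obtain \<theta> where \<theta>: "(\<phi> ` Q, \<psi> ` Q, \<theta>) \<in> E" "\<theta> ` \<phi> ` Q = \<psi> ` Q" "\<forall>x \<in> Q. \<theta> (\<phi> x) = \<psi> x"
    using assms(2) unfolding rep_class_iff by (elim conjE exE)
  define \<theta>' where "\<theta>' = restrict (inv_into (\<phi> ` Q) \<theta>) (\<psi> ` Q)"
  have "(\<psi> ` Q, \<phi> ` Q, \<theta>') \<in> E" and inj: "inj_on \<theta> (\<phi> ` Q)"
    using E \<theta>(1,2) unfolding closed_comp_inv_def \<theta>'_def by metis+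
  moreover have "\<forall>x \<in> Q. \<theta>' (\<psi> x) = \<phi> x"
    using \<theta>(3) inj unfolding \<theta>'_def by (metis imageI inv_into_f_f restrict_apply')
  moreover from this have "\<theta>' ` \<psi> ` Q = \<phi> ` Q"
    by (simp add: image_comp cong: image_cong)
  ultimately show ?thesis
    unfolding rep_class_iff using assms(3) by blast
qed

lemma rep_class_eq:
  assumes "closed_comp_inv E" "\<psi> \<in> rep_class F SE E Q \<phi>" "\<phi> \<in> Hom_F F Q SE"
  shows "rep_class F SE E Q \<psi> = rep_class F SE E Q \<phi>"
  using rep_class_trans[OF assms(1)] rep_class_sym[OF assms] assms(2) by blast

section \<open>Normalizer fusion systems\<close>

lemma normalizer_fs_mono: "H \<subseteq> F \<Longrightarrow> normalizer_fs G T H P \<subseteq> normalizer_fs G T F P"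
  unfolding normalizer_fs_def by blast

locale fusion_system_normalizer = finite_fusion_system +
  fixes P :: "'a set"
  assumes subgroup_P: "subgroup P G" and P_subset_T: "P \<subseteq> T"
begin

abbreviation "N \<equiv> normalizer_in G T P"
abbreviation "N_F \<equiv> normalizer_fs G T F P"

lemma subgroup_N: "subgroup N G"
  using subgroup_normalizer_in[OF subgroup_T subgroup.subset[OF subgroup_P]] .

lemma N_subset_T: "N \<subseteq> T"
  unfolding normalizer_in_def by blast

lemma P_subset_N: "P \<subseteq> N"
  using subgroup_subset_normalizer_in[OF subgroup_P P_subset_T] .

lemma subgroup_set_mult_P: "subgroup A G \<Longrightarrow> A \<subseteq> N \<Longrightarrow> subgroup (A <#> P) G"
  using subgroup_set_mult_normalizer_in[OF subgroup_P] .

lemma set_mult_P_subset_T: "A \<subseteq> N \<Longrightarrow> A <#> P \<subseteq> T"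
  using set_mult_subset_subgroup[OF subgroup_T] N_subset_T P_subset_T by blast

lemma P_subset_set_mult: "subgroup A G \<Longrightarrow> P \<subseteq> A <#> P"
  by (rule subset_set_mult_left[OF _ subgroup.subset[OF subgroup_P]])

lemma subset_set_mult_P: "subgroup A G \<Longrightarrow> A \<subseteq> A <#> P"
  using subset_set_mult_right[OF subgroup_P] subgroup.subset by blast

lemma normalizer_fsD:
  assumes "(A, B, \<theta>) \<in> N_F"
  shows "(A, B, \<theta>) \<in> F" "A \<subseteq> N" "B \<subseteq> N"
    "\<exists>\<psi>. (A <#> P, B <#> P, \<psi>) \<in> F \<and> (\<forall>a \<in> A. \<psi> a = \<theta> a) \<and> \<psi> ` P = P"
  using assms unfolding normalizer_fs_def by blast+

lemma normalizer_fsI: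
  "(A, B, \<theta>) \<in> F \<Longrightarrow> A \<subseteq> N \<Longrightarrow> B \<subseteq> N \<Longrightarrow> (A <#> P, B <#> P, \<psi>) \<in> F \<Longrightarrow>
    \<forall>a \<in> A. \<psi> a = \<theta> a \<Longrightarrow> \<psi> ` P = P \<Longrightarrow> (A, B, \<theta>) \<in> N_F"
  unfolding normalizer_fs_def by blast

lemma aut_P_in_normalizer_fs: "(P, P, \<theta>) \<in> F \<Longrightarrow> (P, P, \<theta>) \<in> N_F"
  using normalizer_fsI[OF _ P_subset_N P_subset_N] aut_image subgroup_mult_id[OF subgroup_P] by simp

lemma normalizer_fs_id:
  assumes "subgroup A G" "A \<subseteq> N"
  shows "(A, A, restrict id A) \<in> N_F"
proof -
  have AP: "subgroup (A <#> P) G" "A <#> P \<subseteq> T"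
    using subgroup_set_mult_P[OF assms] set_mult_P_subset_T[OF assms(2)] by simp_all
  have "A \<subseteq> T" using assms(2) N_subset_T by blast
  moreover have "\<forall>a\<in>A. restrict id (A <#> P) a = restrict id A a"
    using subset_set_mult_P[OF assms(1)] by auto
  moreover have "restrict id (A <#> P) ` P = P"
    using P_subset_set_mult[OF assms(1)] by auto
  ultimately show ?thesis
    using normalizer_fsI[OF inclusion_mor[OF assms(1) order_refl assms(1)] assms(2,2)
        inclusion_mor[OF AP(1) order_refl AP]]
    by simp
qed

lemma normalizer_fs_comp:
  assumes "(A, B, \<theta>\<^sub>1) \<in> N_F" "(B, C, \<theta>\<^sub>2) \<in> N_F"
  shows "(A, C, restrict (\<theta>\<^sub>2 \<circ> \<theta>\<^sub>1) A) \<in> N_F"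
proof -
  obtain \<psi>\<^sub>1 where \<psi>\<^sub>1: "(A <#> P, B <#> P, \<psi>\<^sub>1) \<in> F" "\<forall>a \<in> A. \<psi>\<^sub>1 a = \<theta>\<^sub>1 a" "\<psi>\<^sub>1 ` P = P"
    using normalizer_fsD(4)[OF assms(1)] by (elim exE conjE)
  obtain \<psi>\<^sub>2 where \<psi>\<^sub>2: "(B <#> P, C <#> P, \<psi>\<^sub>2) \<in> F" "\<forall>b \<in> B. \<psi>\<^sub>2 b = \<theta>\<^sub>2 b" "\<psi>\<^sub>2 ` P = P"
    using normalizer_fsD(4)[OF assms(2)] by (elim exE conjE)
  have \<theta>: "(A, B, \<theta>\<^sub>1) \<in> F" "(B, C, \<theta>\<^sub>2) \<in> F" "A \<subseteq> N" "C \<subseteq> N"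
    using normalizer_fsD(1-3)[OF assms(1)] normalizer_fsD(1-3)[OF assms(2)] by simp_all
  have A: "P \<subseteq> A <#> P" "A \<subseteq> A <#> P"
    using P_subset_set_mult[OF morD(1)[OF \<theta>(1)]] subset_set_mult_P[OF morD(1)[OF \<theta>(1)]] .
  have "\<forall>a \<in> A. restrict (\<psi>\<^sub>2 \<circ> \<psi>\<^sub>1) (A <#> P) a = restrict (\<theta>\<^sub>2 \<circ> \<theta>\<^sub>1) A a"
    using A(2) \<psi>\<^sub>1(2) \<psi>\<^sub>2(2) morD(5)[OF \<theta>(1)] by auto
  moreover have "restrict (\<psi>\<^sub>2 \<circ> \<psi>\<^sub>1) (A <#> P) ` P = \<psi>\<^sub>2 ` \<psi>\<^sub>1 ` P"
    using A(1) by (auto simp: image_image cong: image_cong)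
  ultimately show ?thesis
    using normalizer_fsI[OF comp_mor[OF \<theta>(1,2)] \<theta>(3,4) comp_mor[OF \<psi>\<^sub>1(1) \<psi>\<^sub>2(1)]] \<psi>\<^sub>1(3) \<psi>\<^sub>2(3)
    by simp
qed

lemma normalizer_fs_inv:
  assumes "(A, B, \<theta>) \<in> N_F" "\<theta> ` A = B"
  shows "(B, A, restrict (inv_into A \<theta>) B) \<in> N_F"
proof -
  obtain \<psi> where \<psi>: "(A <#> P, B <#> P, \<psi>) \<in> F" "\<forall>a \<in> A. \<psi> a = \<theta> a" "\<psi> ` P = P"
    using normalizer_fsD(4)[OF assms(1)] by (elim exE conjE)
  have \<theta>: "(A, B, \<theta>) \<in> F" "A \<subseteq> N" "B \<subseteq> N"
    using normalizer_fsD(1-3)[OF assms(1)] by simp_all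
  have A: "P \<subseteq> A <#> P" "A \<subseteq> A <#> P"
    using P_subset_set_mult[OF morD(1)[OF \<theta>(1)]] subset_set_mult_P[OF morD(1)[OF \<theta>(1)]] .
  have "\<psi> ` A = B"
    using \<psi>(2) assms(2) by (simp cong: image_cong)
  then have \<psi>_onto: "\<psi> ` (A <#> P) = B <#> P"
    using mor_image_set_mult[OF \<psi>(1) A(2,1)] \<psi>(3) by simp
  define \<psi>' where "\<psi>' = restrict (inv_into (A <#> P) \<psi>) (B <#> P)"
  have \<psi>'_inv: "\<psi>' (\<psi> x) = x" if "x \<in> A <#> P" for x
    using that \<psi>_onto morD(6)[OF \<psi>(1)] unfolding \<psi>'_def by auto
  have "(B <#> P, A <#> P, \<psi>') \<in> F"
    using inv_mor[OF \<psi>(1)] \<psi>_onto unfolding \<psi>'_def by simp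
  moreover have "(B, A, restrict (inv_into A \<theta>) B) \<in> F"
    using inv_mor[OF \<theta>(1)] assms(2) by simp
  moreover have "\<forall>b \<in> B. \<psi>' b = restrict (inv_into A \<theta>) B b"
  proof
    fix b assume "b \<in> B"
    then obtain a where a: "a \<in> A" "b = \<theta> a" using assms(2) by auto
    then have "\<psi>' b = a" using \<psi>'_inv[OF subsetD[OF A(2) a(1)]] \<psi>(2) by simp
    moreover have "inv_into A \<theta> b = a" using a morD(6)[OF \<theta>(1)] by simp
    ultimately show "\<psi>' b = restrict (inv_into A \<theta>) B b" using \<open>b \<in> B\<close> by simp
  qed
  moreover have "\<psi>' ` P = P"
  proof -
    have "\<psi>' ` \<psi> ` P = P"
      using \<psi>'_inv A(1) by (simp add: image_image subset_iff cong: image_cong)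
    then show ?thesis using \<psi>(3) by simp
  qed
  ultimately show ?thesis
    using normalizer_fsI[of B A _ \<psi>'] \<theta>(2,3) by simp
qed

lemma closed_comp_inv_normalizer_fs: "closed_comp_inv N_F"
  using normalizer_fs_comp normalizer_fs_inv normalizer_fsD(1) morD(6) by (intro closed_comp_invI) blast+

end

section \<open>Fusion systems generated by H and Aut_F(P)\<close>

locale fusion_system_generated =
  F: fusion_system_normalizer G T F P + H: fusion_system_normalizer G T H P
  for G :: "('a, 'b) monoid_scheme" (structure) and T :: "'a set" and F H :: "'a fmor set"
    and P :: "'a set" +
  assumes H_subset_F: "H \<subseteq> F"
    and generated: "F = generated_fs G T (H \<union> {(P, P, \<alpha>) | \<alpha>. \<alpha> \<in> Aut_F F P})"
begin

definition H_controlled :: "'a fmor set" where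
  "H_controlled = {(A, B, \<phi>). (A, B, \<phi>) \<in> F \<and> (\<not> F_subconjugate F A P \<longrightarrow> (A, B, \<phi>) \<in> H) \<and>
     (\<forall>A'. subgroup A' G \<longrightarrow> A' \<subseteq> A \<longrightarrow> (F_conjugate H A' P \<longleftrightarrow> F_conjugate H (\<phi> ` A') P))}"

lemma H_controlledD:
  assumes "(A, B, \<phi>) \<in> H_controlled"
  shows "(A, B, \<phi>) \<in> F" "\<not> F_subconjugate F A P \<Longrightarrow> (A, B, \<phi>) \<in> H"
    "subgroup A' G \<Longrightarrow> A' \<subseteq> A \<Longrightarrow> F_conjugate H A' P \<longleftrightarrow> F_conjugate H (\<phi> ` A') P"
  using assms unfolding H_controlled_def by blast+

lemma H_subset_H_controlled: "H \<subseteq> H_controlled"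
proof safe
  fix A B \<phi> assume "(A, B, \<phi>) \<in> H"
  moreover have "F_conjugate H A' P \<longleftrightarrow> F_conjugate H (\<phi> ` A') P"
    if "subgroup A' G" "A' \<subseteq> A" for A'
    using H.F_conjugate_restrict_image[OF \<open>(A, B, \<phi>) \<in> H\<close> that] H.F_conjugate_sym H.F_conjugate_trans
    by blast
  ultimately show "(A, B, \<phi>) \<in> H_controlled"
    using H_subset_F unfolding H_controlled_def by blast
qed

lemma H_controlled_comp:
  assumes "(A, B, \<phi>) \<in> H_controlled" "(B, C, \<psi>) \<in> H_controlled"
  shows "(A, C, restrict (\<psi> \<circ> \<phi>) A) \<in> H_controlled"
proof -
  have \<phi>: "(A, B, \<phi>) \<in> F" and \<psi>: "(B, C, \<psi>) \<in> F"
    using H_controlledD(1) assms by blast+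
  have "(A, C, restrict (\<psi> \<circ> \<phi>) A) \<in> H" if "\<not> F_subconjugate F A P"
    using that F.F_subconjugate_if_mor[OF \<phi>] H_controlledD(2) assms H.comp_mor by blast
  moreover have "F_conjugate H A' P \<longleftrightarrow> F_conjugate H (restrict (\<psi> \<circ> \<phi>) A ` A') P"
    if "subgroup A' G" "A' \<subseteq> A" for A'
  proof -
    have "subgroup (\<phi> ` A') G" "\<phi> ` A' \<subseteq> B"
      using F.restricted_image_subgroup[OF \<phi> that] F.morD(5)[OF \<phi>] that(2) by blast+
    then have "F_conjugate H A' P \<longleftrightarrow> F_conjugate H (\<psi> ` \<phi> ` A') P"
      using H_controlledD(3)[OF assms(1) that] H_controlledD(3)[OF assms(2)] by blast
    moreover have "restrict (\<psi> \<circ> \<phi>) A ` A' = \<psi> ` \<phi> ` A'"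
      using that(2) by (auto simp: image_iff)
    ultimately show ?thesis by simp
  qed
  ultimately show ?thesis
    using F.comp_mor[OF \<phi> \<psi>] unfolding H_controlled_def by blast
qed

lemma H_controlled_onto_image: "(A, B, \<phi>) \<in> H_controlled \<Longrightarrow> (A, \<phi> ` A, \<phi>) \<in> H_controlled"
  using F.mor_onto_image H.mor_onto_image unfolding H_controlled_def by blast

lemma H_controlled_inv:
  assumes "(A, B, \<phi>) \<in> H_controlled"
  shows "(\<phi> ` A, A, restrict (inv_into A \<phi>) (\<phi> ` A)) \<in> H_controlled"
proof -
  let ?\<phi>' = "restrict (inv_into A \<phi>) (\<phi> ` A)"
  have \<phi>: "(A, B, \<phi>) \<in> F" using H_controlledD(1)[OF assms] .
  have \<phi>': "(\<phi> ` A, A, ?\<phi>') \<in> F" using F.inv_mor[OF \<phi>] .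
  have "(\<phi> ` A, A, ?\<phi>') \<in> H" if "\<not> F_subconjugate F (\<phi> ` A) P"
    using that F.F_subconjugate_image[OF \<phi>] H_controlledD(2)[OF assms] H.inv_mor by blast
  moreover have "F_conjugate H B' P \<longleftrightarrow> F_conjugate H (?\<phi>' ` B') P"
    if B': "subgroup B' G" "B' \<subseteq> \<phi> ` A" for B'
  proof -
    have "subgroup (?\<phi>' ` B') G" "?\<phi>' ` B' \<subseteq> A"
      using F.restricted_image_subgroup[OF \<phi>' B'] F.morD(5)[OF \<phi>'] B'(2) by blast+
    moreover have "\<phi> ` ?\<phi>' ` B' = B'"
      using B'(2) by (force simp: image_iff f_inv_into_f subset_iff)
    ultimately show ?thesis
      using H_controlledD(3)[OF assms] by metis
  qed
  ultimately show ?thesis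
    using \<phi>' unfolding H_controlled_def by blast
qed

lemma fusion_system_H_controlled: "fusion_system G T H_controlled"
  unfolding fusion_system_def
proof (intro conjI allI impI)
  show "subgroup T G" using F.subgroup_T .
  show "\<forall>(A, B, \<phi>) \<in> H_controlled. is_subgroup_of G T A \<and> is_subgroup_of G T B \<and> \<phi> \<in> inj_hom G A B"
    using F.fusion_system unfolding fusion_system_def H_controlled_def by blast
  show "(A, B, restrict (conjm G g) A) \<in> H_controlled"
    if "is_subgroup_of G T A \<and> is_subgroup_of G T B \<and> g \<in> T \<and> conjm G g ` A \<subseteq> B" for A B g
    using that H.conj_mor H_subset_H_controlled unfolding is_subgroup_of_def by blast
qed (use H_controlled_comp H_controlled_onto_image H_controlled_inv in blast)+

lemma generators_H_controlled: "H \<union> {(P, P, \<alpha>) | \<alpha>. \<alpha> \<in> Aut_F F P} \<subseteq> H_controlled"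
proof -
  have "(P, P, \<alpha>) \<in> H_controlled" if \<alpha>: "(P, P, \<alpha>) \<in> F" for \<alpha>
  proof -
    have "F_subconjugate F P P"
      using F.F_conjugate_refl[OF F.subgroup_P F.P_subset_T] unfolding F_subconjugate_def by blast
    moreover have "F_conjugate H A' P \<longleftrightarrow> F_conjugate H (\<alpha> ` A') P"
      if A': "subgroup A' G" "A' \<subseteq> P" for A'
    proof (cases "A' = P")
      case True
      then show ?thesis using F.aut_image[OF \<alpha>] by simp
    next
      case False
      \<comment> \<open>a proper subgroup of P and its image under an automorphism are too small to be conjugate to P\<close>
      have "card A' < card P"
        using False A'(2) F.finite_subgroup[OF F.subgroup_P] by (simp add: psubset_card_mono)
      moreover have "card (\<alpha> ` A') = card A'"
        using F.morD(6)[OF \<alpha>] A'(2) by (meson card_image inj_on_subset)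
      ultimately show ?thesis using H.F_conjugate_card by (metis less_irrefl)
    qed
    ultimately show ?thesis
      using \<alpha> unfolding H_controlled_def by blast
  qed
  then show ?thesis
    using H_subset_H_controlled unfolding Aut_F_def Hom_F_def by blast
qed

lemma F_subset_H_controlled: "F \<subseteq> H_controlled"
  using fusion_system_H_controlled generators_H_controlled
  by (subst generated) (auto simp: generated_fs_def)

lemma mor_in_H_if_not_subconjugate:
  "(A, B, \<phi>) \<in> F \<Longrightarrow> \<not> F_subconjugate F A P \<Longrightarrow> (A, B, \<phi>) \<in> H"
  using H_controlledD(2) F_subset_H_controlled by blast

lemma H_conjugate_P_image_iff:
  assumes "(A, B, \<phi>) \<in> F"
  shows "F_conjugate H A P \<longleftrightarrow> F_conjugate H (\<phi> ` A) P"
  using H_controlledD(3) F_subset_H_controlled assms F.morD(1)[OF assms] by blast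

lemma H_conjugate_P_if_F_conjugate:
  assumes "F_conjugate F A P"
  shows "F_conjugate H A P"
proof -
  obtain \<phi> where "(A, P, \<phi>) \<in> F" "\<phi> ` A = P"
    using assms unfolding F_conjugate_def by blast
  then show ?thesis
    using H_conjugate_P_image_iff H.F_conjugate_refl[OF H.subgroup_P H.P_subset_T] by metis
qed

end

section \<open>Bipartite graphs with pendant edges\<close>

definition closed_walk :: "('e \<Rightarrow> 'v \<times> 'v) \<Rightarrow> 'e list \<Rightarrow> 'v list \<Rightarrow> bool" where
  "closed_walk ends es vs \<longleftrightarrow> length vs = length es \<and>
     (\<forall>i < length es. ends (es ! i) = (vs ! i, vs ! ((i + 1) mod length es)) \<or>
                     ends (es ! i) = (vs ! ((i + 1) mod length es), vs ! i))"

lemma mg_acyclic_iff: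
  "mg_acyclic V E ends \<longleftrightarrow>
     \<not> (\<exists>es vs. es \<noteq> [] \<and> closed_walk ends es vs \<and> distinct es \<and> distinct vs \<and> set es \<subseteq> E \<and> set vs \<subseteq> V)"
  unfolding mg_acyclic_def closed_walk_def by metis

lemma closed_walk_ends:
  assumes "closed_walk ends es vs" "e \<in> set es"
  shows "fst (ends e) \<in> set vs" "snd (ends e) \<in> set vs"
proof -
  obtain i where i: "i < length es" "e = es ! i"
    using assms(2) by (metis in_set_conv_nth)
  moreover from i(1) have "(i + 1) mod length es < length es"
    by (intro mod_less_divisor) auto
  ultimately have "i < length vs" "(i + 1) mod length es < length vs"
    using assms(1) unfolding closed_walk_def by simp_all
  then show "fst (ends e) \<in> set vs" "snd (ends e) \<in> set vs"
    using assms(1) i unfolding closed_walk_def by (metis fst_conv snd_conv nth_mem)+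
qed

lemma closed_walk_two_edges:
  assumes walk: "closed_walk ends es vs" and "length es \<ge> 2" "distinct es" "v \<in> set vs"
  shows "\<exists>e\<^sub>1 \<in> set es. \<exists>e\<^sub>2 \<in> set es. e\<^sub>1 \<noteq> e\<^sub>2 \<and>
           v \<in> {fst (ends e\<^sub>1), snd (ends e\<^sub>1)} \<and> v \<in> {fst (ends e\<^sub>2), snd (ends e\<^sub>2)}"
proof -
  let ?k = "length es"
  obtain j where j: "j < ?k" "v = vs ! j"
    using assms(4) walk unfolding closed_walk_def by (metis in_set_conv_nth)
  define i where "i = (if j = 0 then ?k - 1 else j - 1)"
  have i: "i < ?k" "i \<noteq> j" "(i + 1) mod ?k = j"
    using j(1) assms(2) unfolding i_def by auto
  have "v \<in> {fst (ends (es ! j)), snd (ends (es ! j))}" "v \<in> {fst (ends (es ! i)), snd (ends (es ! i))}"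
    using walk j i unfolding closed_walk_def by (metis fst_conv snd_conv insertI1 insertI2)+
  moreover have "es ! j \<noteq> es ! i"
    using assms(3) i j(1) by (simp add: nth_eq_iff_index_eq)
  ultimately show ?thesis
    using i(1) j(1) by (metis nth_mem)
qed

lemma mg_connected_if_root:
  assumes "r \<in> V" and "\<forall>v \<in> V. (v, r) \<in> {(x, y). \<exists>e \<in> E. ends e = (x, y) \<or> ends e = (y, x)}\<^sup>*"
  shows "mg_connected V E ends"
proof -
  define R where "R = {(x, y). \<exists>e \<in> E. ends e = (x, y) \<or> ends e = (y, x)}"
  have "(r, v) \<in> R\<^sup>*" if "v \<in> V" for v
  proof -
    have "(r, v) \<in> (R\<inverse>)\<^sup>*"
      using assms(2) that R_def by (simp add: rtrancl_converse)
    moreover have "R\<inverse> = R" unfolding R_def by auto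
    ultimately show ?thesis by simp
  qed
  then show ?thesis
    using assms unfolding mg_connected_def R_def[symmetric] by (blast intro: rtrancl_trans)
qed

locale pendant_bipartite_graph =
  fixes V :: "('v + 'w) set" and E :: "'e set" and ends :: "'e \<Rightarrow> ('v + 'w) \<times> ('v + 'w)"
    and Z :: "'e set"
  assumes finite_E: "finite E"
    and ends_bipartite: "e \<in> E \<Longrightarrow> \<exists>a b. ends e = (Inl a, Inr b)"
    and ends_in_V: "e \<in> E \<Longrightarrow> fst (ends e) \<in> V" "e \<in> E \<Longrightarrow> snd (ends e) \<in> V"
    and Z_subset_E: "Z \<subseteq> E"
    and pendant: "e \<in> Z \<Longrightarrow> e' \<in> E \<Longrightarrow> snd (ends e') = snd (ends e) \<Longrightarrow> e' = e"
    and left_unique: "e \<in> E - Z \<Longrightarrow> e' \<in> E - Z \<Longrightarrow> fst (ends e') = fst (ends e) \<Longrightarrow> e' = e"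
begin

lemma fst_ends_ne_snd_ends: "e \<in> E \<Longrightarrow> e' \<in> E \<Longrightarrow> fst (ends e) \<noteq> snd (ends e')"
  by (metis ends_bipartite fst_conv snd_conv sum.distinct(1))

lemma closed_walk_length_ge_2:
  assumes walk: "closed_walk ends es vs" and "es \<noteq> []" "set es \<subseteq> E"
  shows "length es \<ge> 2"
proof (rule ccontr)
  assume "\<not> length es \<ge> 2"
  moreover have "length es \<noteq> 0"
    using \<open>es \<noteq> []\<close> by simp
  ultimately have "length es = 1"
    by linarith
  then have "ends (es ! 0) = (vs ! 0, vs ! 0)"
    using walk unfolding closed_walk_def by auto
  moreover have "es ! 0 \<in> E"
    using \<open>es \<noteq> []\<close> \<open>set es \<subseteq> E\<close> by (simp add: subset_iff)
  ultimately show False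
    using fst_ends_ne_snd_ends by (metis fst_conv snd_conv)
qed

lemma closed_walk_other_edge:
  assumes "closed_walk ends es vs" "es \<noteq> []" "distinct es" "set es \<subseteq> E" "v \<in> set vs"
  shows "\<exists>e' \<in> set es. e' \<noteq> e \<and> v \<in> {fst (ends e'), snd (ends e')}"
  using closed_walk_two_edges[OF assms(1) closed_walk_length_ge_2[OF assms(1,2,4)] assms(3,5)] by metis

lemma closed_walk_edge_not_Z:
  assumes walk: "closed_walk ends es vs" "es \<noteq> []" "distinct es" "set es \<subseteq> E" and e: "e \<in> set es"
  shows "e \<notin> Z"
proof
  assume "e \<in> Z"
  obtain e' where e': "e' \<in> set es" "e' \<noteq> e" "snd (ends e) \<in> {fst (ends e'), snd (ends e')}"
    using closed_walk_other_edge[OF walk closed_walk_ends(2)[OF walk(1) e]] by blast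
  have "e \<in> E" "e' \<in> E"
    using e e'(1) walk(4) by blast+
  then have "snd (ends e') = snd (ends e)"
    using e'(3) fst_ends_ne_snd_ends[of e' e] by auto
  then show False
    using pendant[OF \<open>e \<in> Z\<close> \<open>e' \<in> E\<close>] e'(2) by blast
qed

lemma acyclic: "mg_acyclic V E ends"
  unfolding mg_acyclic_iff
proof (intro notI, elim exE conjE)
  fix es vs assume walk: "es \<noteq> []" "closed_walk ends es vs" "distinct es" "set es \<subseteq> E"
  obtain e where e: "e \<in> set es"
    using hd_in_set[OF \<open>es \<noteq> []\<close>] by blast
  obtain e' where e': "e' \<in> set es" "e' \<noteq> e" "fst (ends e) \<in> {fst (ends e'), snd (ends e')}"
    using closed_walk_other_edge[OF walk(2,1,3,4) closed_walk_ends(1)[OF walk(2) e]] by blast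
  have "e \<in> E - Z" "e' \<in> E - Z"
    using e e'(1) closed_walk_edge_not_Z[OF walk(2,1,3,4)] walk(4) by blast+
  moreover have "fst (ends e') = fst (ends e)"
    using e'(3) fst_ends_ne_snd_ends[of e e'] \<open>e \<in> E - Z\<close> \<open>e' \<in> E - Z\<close> by auto
  ultimately show False
    using left_unique e'(2) by blast
qed

lemma H1_trivial: "mg_H1 V E ends = {\<lambda>_. 0 :: 'r :: comm_ring_1}"
proof (intro equalityI subsetI)
  fix c :: "'e \<Rightarrow> 'r" assume "c \<in> mg_H1 V E ends"
  then have off_E: "\<And>e. e \<notin> E \<Longrightarrow> c e = 0"
    and cycle: "\<And>v. v \<in> V \<Longrightarrow>
       (\<Sum>e \<in> {e \<in> E. snd (ends e) = v}. c e) - (\<Sum>e \<in> {e \<in> E. fst (ends e) = v}. c e) = 0"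
    unfolding mg_H1_def by blast+
  have on_Z: "c e = 0" if "e \<in> Z" for e
  proof -
    have "e \<in> E" using that Z_subset_E by blast
    then have in_e: "{e' \<in> E. snd (ends e') = snd (ends e)} = {e}"
      and out_e: "{e' \<in> E. fst (ends e') = snd (ends e)} = {}"
      using pendant[OF that] fst_ends_ne_snd_ends by blast+
    have "(\<Sum>e' \<in> {e}. c e') - (\<Sum>e' \<in> {}. c e') = 0"
      using cycle[OF ends_in_V(2)[OF \<open>e \<in> E\<close>]] unfolding in_e out_e .
    then show ?thesis by simp
  qed
  have off_Z: "c e = 0" if e: "e \<in> E - Z" for e
  proof -
    define S where "S = {e' \<in> E. fst (ends e') = fst (ends e)}"
    have "e \<in> E" using e by blast
    have no_in: "{e' \<in> E. snd (ends e') = fst (ends e)} = {}"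
      using fst_ends_ne_snd_ends[OF \<open>e \<in> E\<close>] by fastforce
    have "sum c {} - sum c S = 0"
      using cycle[OF ends_in_V(1)[OF \<open>e \<in> E\<close>]] unfolding no_in S_def .
    then have "sum c S = 0" by simp
    moreover have "sum c S = c e + sum c (S - {e})"
      using e finite_E unfolding S_def by (simp add: sum.remove)
    moreover have "c e' = 0" if e': "e' \<in> S - {e}" for e'
    proof (cases "e' \<in> Z")
      case False
      then show ?thesis
        using left_unique[OF e] e' unfolding S_def by auto
    qed (rule on_Z)
    ultimately show ?thesis by simp
  qed
  show "c \<in> {\<lambda>_. 0}"
    using off_E on_Z off_Z by auto
qed (simp add: mg_H1_def)

end

section \<open>The graph Rep_F(Q, \<Lambda>)\<close>

locale rep_graph = fusion_system_generated +
  fixes Q :: "'a set"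
  assumes subgroup_Q: "subgroup Q G" and Q_subset_T: "Q \<subseteq> T"
    and Q_not_conjugate_into_proper: "\<not> (\<exists>R. R \<subset> P \<and> F_conjugate F Q R)"
begin

abbreviation "V \<equiv> RepL_V F T H F.N F.N_F Q"
abbreviation "E \<equiv> RepL_E F F.N H.N_F Q"
abbreviation "ends \<equiv> RepL_ends F T H F.N F.N_F Q"
abbreviation "cl_H \<equiv> rep_class F T H Q"
abbreviation "cl_NF \<equiv> rep_class F F.N F.N_F Q"
abbreviation "cl_NH \<equiv> rep_class F F.N H.N_F Q"

lemma V_eq: "V = Inl ` cl_H ` Hom_F F Q T \<union> Inr ` cl_NF ` Hom_F F Q F.N"
  unfolding RepL_V_def Rep_def ..

lemma E_eq: "E = cl_NH ` Hom_F F Q F.N"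
  unfolding RepL_E_def Rep_def ..

lemma Hom_N_subset_Hom_T: "Hom_F F Q F.N \<subseteq> Hom_F F Q T"
  unfolding Hom_F_def using F.mor_enlarge_codomain[OF _ F.N_subset_T F.subgroup_T] by blast

lemma self_in_cl_H:
  assumes "\<phi> \<in> Hom_F F Q T"
  shows "\<phi> \<in> cl_H \<phi>"
proof -
  have "subgroup (\<phi> ` Q) G" "\<phi> ` Q \<subseteq> T"
    using F.mor_image_subgroup assms unfolding Hom_F_def by auto
  then show ?thesis
    by (intro rep_class_self H.inclusion_mor assms order_refl)
qed

lemma self_in_cl_NH:
  assumes "\<phi> \<in> Hom_F F Q F.N"
  shows "\<phi> \<in> cl_NH \<phi>"
proof -
  have "subgroup (\<phi> ` Q) G" "\<phi> ` Q \<subseteq> F.N"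
    using F.mor_image_subgroup F.morD(5) assms unfolding Hom_F_def by auto
  then show ?thesis
    by (intro rep_class_self H.normalizer_fs_id assms)
qed

lemma cl_NH_subset_cl_NF: "cl_NH \<phi> \<subseteq> cl_NF \<phi>"
  by (intro rep_class_mono normalizer_fs_mono H_subset_F order_refl)

lemma cl_NH_subset_cl_H: "cl_NH \<phi> \<subseteq> cl_H \<phi>"
proof (intro rep_class_mono Hom_N_subset_Hom_T subsetI)
  fix x assume "x \<in> H.N_F"
  then show "x \<in> H"
    using H.normalizer_fsD(1) by (cases x) auto
qed

lemma cl_H_eq: "\<psi> \<in> cl_H \<phi> \<Longrightarrow> \<phi> \<in> Hom_F F Q T \<Longrightarrow> cl_H \<psi> = cl_H \<phi>"
  using rep_class_eq[OF H.closed_comp_inv] .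

lemma cl_NF_eq: "\<psi> \<in> cl_NF \<phi> \<Longrightarrow> \<phi> \<in> Hom_F F Q F.N \<Longrightarrow> cl_NF \<psi> = cl_NF \<phi>"
  using rep_class_eq[OF F.closed_comp_inv_normalizer_fs] .

lemma cl_NH_eq: "\<psi> \<in> cl_NH \<phi> \<Longrightarrow> \<phi> \<in> Hom_F F Q F.N \<Longrightarrow> cl_NH \<psi> = cl_NH \<phi>"
  using rep_class_eq[OF H.closed_comp_inv_normalizer_fs] .

lemma ends_cl_NH:
  assumes "\<phi> \<in> Hom_F F Q F.N"
  shows "ends (cl_NH \<phi>) = (Inl (cl_H \<phi>), Inr (cl_NF \<phi>))"
proof -
  let ?\<psi> = "SOME \<psi>. \<psi> \<in> cl_NH \<phi>"
  have "?\<psi> \<in> cl_NH \<phi>"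
    using someI[of "\<lambda>\<psi>. \<psi> \<in> cl_NH \<phi>"] self_in_cl_NH[OF assms] by blast
  then have "cl_H ?\<psi> = cl_H \<phi>" "cl_NF ?\<psi> = cl_NF \<phi>"
    using cl_H_eq[OF subsetD[OF cl_NH_subset_cl_H]] cl_NF_eq[OF subsetD[OF cl_NH_subset_cl_NF]]
      assms Hom_N_subset_Hom_T by blast+
  then show ?thesis
    unfolding RepL_ends_def by (simp add: Let_def)
qed

lemma image_not_subset_P:
  assumes "\<phi>' \<in> Hom_F F Q F.N" "\<phi> ` Q \<noteq> P" "\<phi> \<in> cl_NF \<phi>'"
  shows "\<not> \<phi>' ` Q \<subseteq> P"
proof
  assume sub: "\<phi>' ` Q \<subseteq> P"
  have "F_conjugate F Q (\<phi>' ` Q)"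
    using F.F_conjugate_image assms(1) unfolding Hom_F_def by blast
  then have P: "\<phi>' ` Q = P"
    using sub Q_not_conjugate_into_proper by blast
  obtain \<theta> where \<theta>: "(\<phi>' ` Q, \<phi> ` Q, \<theta>) \<in> F.N_F" "\<theta> ` \<phi>' ` Q = \<phi> ` Q"
    using assms(3) unfolding rep_class_iff by (elim conjE exE)
  obtain \<psi> where "\<forall>a \<in> \<phi>' ` Q. \<psi> a = \<theta> a" "\<psi> ` P = P"
    using F.normalizer_fsD(4)[OF \<theta>(1)] by (elim conjE exE)
  then have "\<theta> ` P = P"
    using P by (metis image_cong)
  then show False
    using \<theta>(2) P assms(2) by simp
qed

lemma cl_NF_imp_cl_NH:
  assumes "\<phi> \<in> Hom_F F Q F.N" "\<phi>' \<in> Hom_F F Q F.N" "\<phi> ` Q \<noteq> P" "\<phi> \<in> cl_NF \<phi>'"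
  shows "\<phi> \<in> cl_NH \<phi>'"
proof -
  obtain \<theta> where \<theta>: "(\<phi>' ` Q, \<phi> ` Q, \<theta>) \<in> F.N_F" "\<theta> ` \<phi>' ` Q = \<phi> ` Q" "\<forall>x \<in> Q. \<theta> (\<phi>' x) = \<phi> x"
    using assms(4) unfolding rep_class_iff by (elim conjE exE)
  obtain \<psi> where \<psi>: "(\<phi>' ` Q <#> P, \<phi> ` Q <#> P, \<psi>) \<in> F" "\<forall>a \<in> \<phi>' ` Q. \<psi> a = \<theta> a" "\<psi> ` P = P"
    using F.normalizer_fsD(4)[OF \<theta>(1)] by (elim conjE exE)
  have \<theta>F: "(\<phi>' ` Q, \<phi> ` Q, \<theta>) \<in> F" "\<phi>' ` Q \<subseteq> F.N" "\<phi> ` Q \<subseteq> F.N"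
    using F.normalizer_fsD(1-3)[OF \<theta>(1)] by simp_all
  have sg: "subgroup (\<phi>' ` Q) G"
    using F.morD(1)[OF \<theta>F(1)] .
  \<comment> \<open>the extension of \<theta> lives on a subgroup strictly containing P, so it lies in H\<close>
  have "P \<subset> \<phi>' ` Q <#> P"
    using F.P_subset_set_mult[OF sg] F.subset_set_mult_P[OF sg]
      image_not_subset_P[OF assms(2,3,4)] by blast
  then have \<psi>H: "(\<phi>' ` Q <#> P, \<phi> ` Q <#> P, \<psi>) \<in> H"
    using mor_in_H_if_not_subconjugate[OF \<psi>(1)] F.not_F_subconjugate_if_psupset
      F.subgroup_set_mult_P[OF sg \<theta>F(2)] by blast
  have "restrict \<psi> (\<phi>' ` Q) = \<theta>"
    using \<psi>(2) F.morD(7)[OF \<theta>F(1)] by (auto simp: extensional_def fun_eq_iff)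
  then have "(\<phi>' ` Q, \<phi> ` Q, \<theta>) \<in> H"
    using H.restrict_mor[OF \<psi>H sg F.subset_set_mult_P[OF sg]] H.mor_change_codomain
      \<theta>(2) F.morD(3,4)[OF \<theta>F(1)] by (metis order_refl)
  then have "(\<phi>' ` Q, \<phi> ` Q, \<theta>) \<in> H.N_F"
    using H.normalizer_fsI \<theta>F(2,3) \<psi>H \<psi>(2,3) by blast
  then show ?thesis
    using \<theta>(2,3) assms(1) unfolding rep_class_iff by blast
qed

lemma cl_H_imp_cl_NH_onto_P:
  assumes "\<phi> \<in> Hom_F F Q F.N" "\<phi>' \<in> Hom_F F Q F.N" "\<phi> ` Q = P" "\<phi>' ` Q = P" "\<phi>' \<in> cl_H \<phi>"
  shows "\<phi>' \<in> cl_NH \<phi>"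
proof -
  obtain \<theta> where \<theta>: "(P, P, \<theta>) \<in> H" "\<theta> ` P = P" "\<forall>x \<in> Q. \<theta> (\<phi> x) = \<phi>' x"
    using assms(3-5) unfolding rep_class_iff by (elim conjE exE) simp
  have "(\<phi> ` Q, \<phi>' ` Q, \<theta>) \<in> H.N_F" "\<theta> ` \<phi> ` Q = \<phi>' ` Q"
    using H.aut_P_in_normalizer_fs[OF \<theta>(1)] \<theta>(2) assms(3,4) by simp_all
  then show ?thesis
    using \<theta>(3) assms(2) unfolding rep_class_iff by blast
qed

lemma cl_NH_eq_if_cl_NF_eq:
  assumes "\<phi> \<in> Hom_F F Q F.N" "\<phi> ` Q \<noteq> P" "\<phi>' \<in> Hom_F F Q F.N" "cl_NF \<phi>' = cl_NF \<phi>"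
  shows "cl_NH \<phi>' = cl_NH \<phi>"
proof -
  have "\<phi> \<in> cl_NF \<phi>'"
    using subsetD[OF cl_NH_subset_cl_NF self_in_cl_NH[OF assms(1)]] assms(4) by simp
  then show ?thesis
    using cl_NH_eq[OF cl_NF_imp_cl_NH[OF assms(1,3,2)] assms(3)] by simp
qed

lemma cl_NH_eq_if_cl_H_eq_onto_P:
  assumes "\<phi> \<in> Hom_F F Q F.N" "\<phi> ` Q = P" "\<phi>' \<in> Hom_F F Q F.N" "\<phi>' ` Q = P" "cl_H \<phi>' = cl_H \<phi>"
  shows "cl_NH \<phi>' = cl_NH \<phi>"
proof -
  have "\<phi>' \<in> cl_H \<phi>"
    using self_in_cl_H[OF subsetD[OF Hom_N_subset_Hom_T assms(3)]] assms(5) by simp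
  then show ?thesis
    using cl_NH_eq[OF cl_H_imp_cl_NH_onto_P[OF assms(1,3,2,4)] assms(1)] by simp
qed

abbreviation "Z \<equiv> {cl_NH \<phi> | \<phi>. \<phi> \<in> Hom_F F Q F.N \<and> \<phi> ` Q \<noteq> P}"

lemma edge_onto_P:
  assumes "e \<in> E - Z"
  obtains \<phi> where "\<phi> \<in> Hom_F F Q F.N" "\<phi> ` Q = P" "e = cl_NH \<phi>"
proof -
  obtain \<phi> where "\<phi> \<in> Hom_F F Q F.N" "e = cl_NH \<phi>"
    using assms unfolding E_eq by (elim DiffE imageE)
  moreover from this have "\<phi> ` Q = P"
    using assms by auto
  ultimately show thesis
    using that by blast
qed

lemma pendant_bipartite_graph: "pendant_bipartite_graph V E ends Z"
proof unfold_locales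
  show "finite E"
    using F.finite_Hom_F[OF subgroup_Q] by (simp add: E_eq)
  show "Z \<subseteq> E"
    using E_eq by blast
next
  fix e assume "e \<in> E"
  then obtain \<phi> where \<phi>: "\<phi> \<in> Hom_F F Q F.N" "e = cl_NH \<phi>"
    using E_eq by blast
  then show "\<exists>a b. ends e = (Inl a, Inr b)"
    using ends_cl_NH by simp
  show "fst (ends e) \<in> V" "snd (ends e) \<in> V"
    using \<phi> ends_cl_NH Hom_N_subset_Hom_T unfolding V_eq by auto
next
  fix e e' assume e: "e \<in> Z" and e': "e' \<in> E" and snd_eq: "snd (ends e') = snd (ends e)"
  obtain \<phi> where \<phi>: "\<phi> \<in> Hom_F F Q F.N" "\<phi> ` Q \<noteq> P" "e = cl_NH \<phi>"
    using e by blast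
  obtain \<phi>' where \<phi>': "\<phi>' \<in> Hom_F F Q F.N" "e' = cl_NH \<phi>'"
    using e' unfolding E_eq by (elim imageE)
  show "e' = e"
    using cl_NH_eq_if_cl_NF_eq[OF \<phi>(1,2) \<phi>'(1)] snd_eq ends_cl_NH[OF \<phi>(1)] ends_cl_NH[OF \<phi>'(1)]
      \<phi>(3) \<phi>'(2) by simp
next
  fix e e' assume e: "e \<in> E - Z" and e': "e' \<in> E - Z" and fst_eq: "fst (ends e') = fst (ends e)"
  obtain \<phi> \<phi>' where \<phi>: "\<phi> \<in> Hom_F F Q F.N" "\<phi> ` Q = P" "e = cl_NH \<phi>"
    and \<phi>': "\<phi>' \<in> Hom_F F Q F.N" "\<phi>' ` Q = P" "e' = cl_NH \<phi>'"
    using edge_onto_P[OF e] edge_onto_P[OF e'] by metis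
  show "e' = e"
    using cl_NH_eq_if_cl_H_eq_onto_P[OF \<phi>(1,2) \<phi>'(1,2)] fst_eq ends_cl_NH[OF \<phi>(1)] ends_cl_NH[OF \<phi>'(1)]
      \<phi>(3) \<phi>'(3) by simp
qed

abbreviation "adjacent \<equiv> {(x, y). \<exists>e \<in> E. ends e = (x, y) \<or> ends e = (y, x)}"

lemma edge_adjacent:
  assumes "\<phi> \<in> Hom_F F Q F.N"
  shows "(Inl (cl_H \<phi>), Inr (cl_NF \<phi>)) \<in> adjacent" "(Inr (cl_NF \<phi>), Inl (cl_H \<phi>)) \<in> adjacent"
  using ends_cl_NH[OF assms] assms unfolding E_eq by auto

lemma cl_H_const_if_not_subconjugate:
  assumes "\<not> F_subconjugate F Q P" "\<phi> \<in> Hom_F F Q T"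
  shows "cl_H \<phi> = cl_H (restrict id Q)"
proof -
  have id: "restrict id Q \<in> Hom_F F Q T"
    using F.inclusion_mor[OF subgroup_Q Q_subset_T F.subgroup_T order_refl] by (simp add: Hom_F_def)
  have "(Q, \<phi> ` Q, \<phi>) \<in> H"
    using H.mor_onto_image mor_in_H_if_not_subconjugate assms unfolding Hom_F_def by blast
  then have "\<phi> \<in> cl_H (restrict id Q)"
    using assms(2) unfolding rep_class_iff by (intro conjI exI[of _ \<phi>]) auto
  then show ?thesis
    using cl_H_eq id by blast
qed

lemma Inl_adjacent_if_conjugate_P:
  assumes k: "(Q, P, k) \<in> H" "k ` Q = P" and \<phi>: "\<phi> \<in> Hom_F F Q T"
  shows "(Inl (cl_H \<phi>), Inr (cl_NF k)) \<in> adjacent"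
proof -
  have \<phi>F: "(Q, T, \<phi>) \<in> F" using \<phi> unfolding Hom_F_def by simp
  have "F_conjugate H Q P"
    using k unfolding F_conjugate_def by blast
  then obtain g where g: "(\<phi> ` Q, P, g) \<in> H" "g ` \<phi> ` Q = P"
    using H_conjugate_P_image_iff[OF \<phi>F] unfolding F_conjugate_def by blast
  define \<chi> where "\<chi> = restrict (g \<circ> \<phi>) Q"
  have \<chi>F: "(Q, P, \<chi>) \<in> F"
    using F.comp_mor[OF F.mor_onto_image[OF \<phi>F]] g(1) H_subset_F unfolding \<chi>_def by blast
  have \<chi>Q: "\<chi> ` Q = P"
    using g(2) unfolding \<chi>_def by (simp add: image_image)
  have \<chi>N: "\<chi> \<in> Hom_F F Q F.N"
    using F.mor_enlarge_codomain[OF \<chi>F F.P_subset_N F.subgroup_N F.N_subset_T] by (simp add: Hom_F_def)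
  have "\<chi> \<in> cl_H \<phi>"
    using g \<chi>Q subsetD[OF Hom_N_subset_Hom_T \<chi>N] unfolding rep_class_iff \<chi>_def by auto
  then have cl_H_\<chi>: "cl_H \<chi> = cl_H \<phi>"
    using cl_H_eq \<phi> by blast
  \<comment> \<open>k and \<chi> differ by the automorphism k \<circ> \<chi>\<inverse> of P, which lies in N_F(P)\<close>
  define \<theta> where "\<theta> = restrict (k \<circ> restrict (inv_into Q \<chi>) P) P"
  have \<theta>F: "(P, P, \<theta>) \<in> F"
    using F.comp_mor[OF _ subsetD[OF H_subset_F k(1)]] F.inv_mor[OF \<chi>F] \<chi>Q unfolding \<theta>_def by simp
  have "\<forall>x \<in> Q. \<theta> (\<chi> x) = k x"
    using \<chi>Q F.morD(6)[OF \<chi>F] unfolding \<theta>_def by (auto simp: inv_into_f_f)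
  then have "k \<in> cl_NF \<chi>"
    using F.aut_P_in_normalizer_fs[OF \<theta>F] F.aut_image[OF \<theta>F] \<chi>Q k(2) k(1) H_subset_F
      F.mor_enlarge_codomain[OF _ F.P_subset_N F.subgroup_N F.N_subset_T]
    unfolding rep_class_iff Hom_F_def by auto
  then have "cl_NF k = cl_NF \<chi>"
    using cl_NF_eq \<chi>N by blast
  then show ?thesis
    using edge_adjacent(1)[OF \<chi>N] cl_H_\<chi> by simp
qed

lemma Inl_vertices_joined: "\<exists>r \<in> V. \<forall>\<phi> \<in> Hom_F F Q T. (Inl (cl_H \<phi>), r) \<in> adjacent\<^sup>*"
proof (cases "F_subconjugate F Q P")
  case False
  have "restrict id Q \<in> Hom_F F Q T"
    using F.inclusion_mor[OF subgroup_Q Q_subset_T F.subgroup_T order_refl] by (simp add: Hom_F_def)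
  then have "Inl (cl_H (restrict id Q)) \<in> V"
    unfolding V_eq by blast
  then show ?thesis
    using cl_H_const_if_not_subconjugate[OF False] by auto
next
  case True
  then obtain R where "R \<subseteq> P" "F_conjugate F Q R"
    unfolding F_subconjugate_def by blast
  then have "F_conjugate F Q P"
    using Q_not_conjugate_into_proper by (metis psubsetI)
  then obtain k where k: "(Q, P, k) \<in> H" "k ` Q = P"
    using H_conjugate_P_if_F_conjugate unfolding F_conjugate_def by blast
  have "k \<in> Hom_F F Q F.N"
    using F.mor_enlarge_codomain[OF subsetD[OF H_subset_F k(1)] F.P_subset_N F.subgroup_N F.N_subset_T]
    unfolding Hom_F_def by simp
  then have "Inr (cl_NF k) \<in> V"
    unfolding V_eq by blast
  then show ?thesis
    using Inl_adjacent_if_conjugate_P[OF k] by blast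
qed

lemma connected: "mg_connected V E ends"
proof -
  obtain r where r: "r \<in> V" "\<forall>\<phi> \<in> Hom_F F Q T. (Inl (cl_H \<phi>), r) \<in> adjacent\<^sup>*"
    using Inl_vertices_joined by blast
  have "(v, r) \<in> adjacent\<^sup>*" if "v \<in> V" for v
  proof -
    consider (Inl) \<phi> where "\<phi> \<in> Hom_F F Q T" "v = Inl (cl_H \<phi>)"
      | (Inr) \<phi> where "\<phi> \<in> Hom_F F Q F.N" "v = Inr (cl_NF \<phi>)"
      using \<open>v \<in> V\<close> V_eq by blast
    then show ?thesis
    proof cases
      case Inr
      have "(v, Inl (cl_H \<phi>)) \<in> adjacent"
        using edge_adjacent(2)[OF Inr(1)] Inr(2) by simp
      moreover have "(Inl (cl_H \<phi>), r) \<in> adjacent\<^sup>*"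
        using r(2) subsetD[OF Hom_N_subset_Hom_T Inr(1)] by blast
      ultimately show ?thesis
        by (rule converse_rtrancl_into_rtrancl)
    qed (use r(2) in blast)
  qed
  then show ?thesis
    by (intro mg_connected_if_root[OF r(1)] ballI)
qed

lemma tree: "mg_tree V E ends"
  using connected pendant_bipartite_graph.acyclic[OF pendant_bipartite_graph]
  unfolding mg_tree_def by blast

lemma H1_trivial: "mg_H1 V E ends = {\<lambda>_. 0 :: 'r :: comm_ring_1}"
  using pendant_bipartite_graph.H1_trivial[OF pendant_bipartite_graph] .

end

theorem corollary4p3:
  fixes S :: "('a, 'b) monoid_scheme" and p n :: nat
    and F H :: "'a fmor set" and C :: "'a set set" and P :: "'a set"
  assumes "group S" and "finite (carrier S)" and "Factorial_Ring.prime p" and "card (carrier S) = p ^ n"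
    and "saturated S (carrier S) p F" and "saturated S (carrier S) p H" and "H \<subseteq> F"
    and C_sub: "\<forall>Q \<in> C. subgroup Q S"
    and C_conj: "\<forall>Q \<in> C. \<forall>B. F_conjugate F Q B \<longrightarrow> B \<in> C"
    and C_over: "\<forall>Q \<in> C. \<forall>R. subgroup R S \<and> Q \<subseteq> R \<longrightarrow> R \<in> C"
    and "P \<in> C" and "fully_normalized S (carrier S) F P"
    and gen: "F = generated_fs S (carrier S) (H \<union> {(P, P, \<alpha>) | \<alpha>. \<alpha> \<in> Aut_F F P})"
  defines "V \<equiv> RepL_V F (carrier S) H (normalizer_in S (carrier S) P) (normalizer_fs S (carrier S) F P)"
    and "E \<equiv> RepL_E F (normalizer_in S (carrier S) P) (normalizer_fs S (carrier S) H P)"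
    and "ends \<equiv> RepL_ends F (carrier S) H (normalizer_in S (carrier S) P) (normalizer_fs S (carrier S) F P)"
  shows "(\<forall>Q. subgroup Q S \<and> \<not> (\<exists>R. R \<subset> P \<and> F_conjugate F Q R)
            \<longrightarrow> mg_tree (V Q) (E Q) (ends Q))
       \<and> (\<forall>Q. subgroup Q S \<and> \<not> (\<exists>R. R \<subset> P \<and> F_conjugate F Q R)
            \<longrightarrow> mg_H1 (V Q) (E Q) (ends Q) = {\<lambda>_. 0 :: 'r :: comm_ring_1})
       \<and> ((\<forall>R \<in> C. \<not> R \<subset> P) \<longrightarrow>
            (\<forall>Q \<in> C. mg_H1 (V Q) (E Q) (ends Q) = {\<lambda>_. 0 :: 'r :: comm_ring_1}))"
proof -
  have fusion_systems: "fusion_system S (carrier S) F" "fusion_system S (carrier S) H"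
    using assms(5,6) unfolding saturated_def by blast+
  have P: "subgroup P S"
    using C_sub \<open>P \<in> C\<close> by blast
  have graph: "mg_tree (V Q) (E Q) (ends Q) \<and> mg_H1 (V Q) (E Q) (ends Q) = {\<lambda>_. 0 :: 'r :: comm_ring_1}"
    if Q: "subgroup Q S" "\<not> (\<exists>R. R \<subset> P \<and> F_conjugate F Q R)" for Q
  proof -
    interpret rep_graph S "carrier S" F H P Q
      by (intro rep_graph.intro fusion_system_generated.intro fusion_system_normalizer.intro
          finite_fusion_system.intro finite_fusion_system_axioms.intro fusion_system_normalizer_axioms.intro
          fusion_system_generated_axioms.intro rep_graph_axioms.intro
          assms(1,2,7) fusion_systems P Q gen subgroup.subset subset_refl)
    show ?thesis
      using tree H1_trivial unfolding V_def E_def ends_def by simp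
  qed
  moreover have "\<not> (\<exists>R. R \<subset> P \<and> F_conjugate F Q R)" if "\<forall>R \<in> C. \<not> R \<subset> P" "Q \<in> C" for Q
    using C_conj that by blast
  ultimately show ?thesis
    using C_sub by blast
qed

end
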